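(* Let $G$ be an AT-free graph. Then $\operatorname{tw}(G)\le 3\Delta(G)-2$, where $\Delta(G)$ is the maximum degree of $G$.
   Context: An asteroidal triple in $G$ is an independent set of three vertices such that each pair is joined by a path avoiding the (closed) neighborhood of the third; $G$ is AT-free if it has no asteroidal triple. The treewidth $\operatorname{tw}(G)$ is the minimum, over all tree decompositions $(\{X_i\},T)$ of $G$ (a tree $T$ with vertex subsets $X_i$ at its nodes covering all vertices and all edges, such that for each vertex the nodes containing it form a connected subtree), of $\max_i|X_i|-1$. *)

theory Defs
  imports Main
begin

definition simple_graph :: "'a set \<Rightarrow> ('a \<Rightarrow> 'a \<Rightarrow> bool) \<Rightarrow> bool" where
  "simple_graph V E \<longleftrightarrow> finite V \<and> (\<forall>u v. E u v \<longrightarrow> u \<in> V \<and> v \<in> V)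
     \<and> (\<forall>u v. E u v \<longrightarrow> E v u) \<and> (\<forall>u. \<not> E u u)"

definition degree :: "'a set \<Rightarrow> ('a \<Rightarrow> 'a \<Rightarrow> bool) \<Rightarrow> 'a \<Rightarrow> nat" where
  "degree V E v = card {u \<in> V. E v u}"

text \<open>Maximum degree (0 for the empty graph).\<close>
definition max_degree :: "'a set \<Rightarrow> ('a \<Rightarrow> 'a \<Rightarrow> bool) \<Rightarrow> nat" where
  "max_degree V E = (if V = {} then 0 else Max (degree V E ` V))"

definition closed_nbhd :: "'a set \<Rightarrow> ('a \<Rightarrow> 'a \<Rightarrow> bool) \<Rightarrow> 'a \<Rightarrow> 'a set" where
  "closed_nbhd V E z = insert z {u \<in> V. E z u}"

definition path_within :: "('a \<Rightarrow> 'a \<Rightarrow> bool) \<Rightarrow> 'a set \<Rightarrow> 'a \<Rightarrow> 'a \<Rightarrow> bool" where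
  "path_within E S x y \<longleftrightarrow> x \<in> S \<and> y \<in> S \<and> (\<lambda>a b. E a b \<and> a \<in> S \<and> b \<in> S)\<^sup>*\<^sup>* x y"

definition avoids_path :: "'a set \<Rightarrow> ('a \<Rightarrow> 'a \<Rightarrow> bool) \<Rightarrow> 'a \<Rightarrow> 'a \<Rightarrow> 'a \<Rightarrow> bool" where
  "avoids_path V E x y z \<longleftrightarrow> path_within E (V - closed_nbhd V E z) x y"

definition asteroidal_triple :: "'a set \<Rightarrow> ('a \<Rightarrow> 'a \<Rightarrow> bool) \<Rightarrow> 'a \<Rightarrow> 'a \<Rightarrow> 'a \<Rightarrow> bool" where
  "asteroidal_triple V E x y z \<longleftrightarrow>
     x \<in> V \<and> y \<in> V \<and> z \<in> V \<and> x \<noteq> y \<and> y \<noteq> z \<and> x \<noteq> z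
     \<and> \<not> E x y \<and> \<not> E y z \<and> \<not> E x z
     \<and> avoids_path V E x y z \<and> avoids_path V E y z x \<and> avoids_path V E x z y"

definition AT_free :: "'a set \<Rightarrow> ('a \<Rightarrow> 'a \<Rightarrow> bool) \<Rightarrow> bool" where
  "AT_free V E \<longleftrightarrow> \<not> (\<exists>x y z. asteroidal_triple V E x y z)"

definition connected_on :: "'b set \<Rightarrow> ('b \<Rightarrow> 'b \<Rightarrow> bool) \<Rightarrow> bool" where
  "connected_on N T \<longleftrightarrow> (\<forall>a\<in>N. \<forall>b\<in>N. (\<lambda>u v. T u v \<and> u \<in> N \<and> v \<in> N)\<^sup>*\<^sup>* a b)"

definition is_cycle :: "('b \<Rightarrow> 'b \<Rightarrow> bool) \<Rightarrow> 'b list \<Rightarrow> bool" where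
  "is_cycle T cs \<longleftrightarrow> length cs \<ge> 3 \<and> distinct cs
     \<and> (\<forall>i. Suc i < length cs \<longrightarrow> T (cs ! i) (cs ! Suc i)) \<and> T (last cs) (hd cs)"

definition is_tree :: "'b set \<Rightarrow> ('b \<Rightarrow> 'b \<Rightarrow> bool) \<Rightarrow> bool" where
  "is_tree N T \<longleftrightarrow> simple_graph N T \<and> N \<noteq> {} \<and> connected_on N T
     \<and> \<not> (\<exists>cs. is_cycle T cs)"

definition tree_decomposition ::
  "'a set \<Rightarrow> ('a \<Rightarrow> 'a \<Rightarrow> bool) \<Rightarrow> nat set \<Rightarrow> (nat \<Rightarrow> nat \<Rightarrow> bool) \<Rightarrow> (nat \<Rightarrow> 'a set) \<Rightarrow> bool" where
  "tree_decomposition V E N T X \<longleftrightarrow> is_tree N T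
     \<and> (\<Union>n\<in>N. X n) = V
     \<and> (\<forall>u v. E u v \<longrightarrow> (\<exists>n\<in>N. u \<in> X n \<and> v \<in> X n))
     \<and> (\<forall>v\<in>V. connected_on {n \<in> N. v \<in> X n} T)"

definition decomposition_width :: "nat set \<Rightarrow> (nat \<Rightarrow> 'a set) \<Rightarrow> nat" where
  "decomposition_width N X = Max ((\<lambda>n. card (X n)) ` N) - 1"

definition treewidth :: "'a set \<Rightarrow> ('a \<Rightarrow> 'a \<Rightarrow> bool) \<Rightarrow> nat" where
  "treewidth V E = (LEAST w. \<exists>N T X. tree_decomposition V E N T X \<and> decomposition_width N X = w)"

end

theory Submission
  imports Defs
begin

(*
  An AT-free graph has a dominating pair x, y: no x-y path avoids the closed
  neighbourhood of any vertex. Such a pair is found among the nonadjacent pairs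
  by maximising, lexicographically, the sizes of the component of y in G - N[x]
  and of x in G - N[y]: a vertex w whose neighbourhood misses an x-y path would
  give a better pair, since x, y, w is not an asteroidal triple.

  In a connected AT-free graph a shortest x-y path p_0 ... p_k therefore
  dominates every vertex, and the windows N[p_i] u N[p_(i+1)] u N[p_(i+2)] form
  a path decomposition. A vertex only meets neighbourhoods of path vertices at
  distance at most 2, which gives the interval property; an edge uv with u near
  p_a but v only near p_(a+3) would make p_a, p_(a+2), v an asteroidal triple.
  Since p_(i+1) is a common neighbour of p_i and p_(i+2), a window has at most
  3 Delta - 1 vertices. Decompositions of the components are concatenated.
*)

definition path_tree :: "nat \<Rightarrow> nat \<Rightarrow> nat \<Rightarrow> bool" where
  "path_tree n i j \<longleftrightarrow> i < n \<and> j < n \<and> (Suc i = j \<or> Suc j = i)"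

lemma connected_on_path_tree:
  assumes S: "S \<subseteq> {..<n}"
    and convex: "\<And>i j l. i \<in> S \<Longrightarrow> l \<in> S \<Longrightarrow> i \<le> j \<Longrightarrow> j \<le> l \<Longrightarrow> j \<in> S"
  shows "connected_on S (path_tree n)"
proof -
  let ?R = "\<lambda>u v. path_tree n u v \<and> u \<in> S \<and> v \<in> S"
  have "symp ?R" by (auto simp: symp_def path_tree_def)
  have up: "?R\<^sup>*\<^sup>* i (i + d)" if "i \<in> S" "i + d \<in> S" for i d
    using that(2)
  proof (induction d)
    case (Suc d)
    then have mid: "i + d \<in> S" using convex[OF that(1)] by simp
    with Suc.prems S have "?R (i + d) (i + Suc d)" by (auto simp: path_tree_def)
    with Suc.IH[OF mid] show ?case by (rule rtranclp.rtrancl_into_rtrancl)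
  qed simp
  show ?thesis unfolding connected_on_def
  proof (intro ballI)
    fix i j assume "i \<in> S" "j \<in> S"
    then show "?R\<^sup>*\<^sup>* i j"
      using up[of i "j - i"] up[of j "i - j"] symp_rtranclp[OF \<open>symp ?R\<close>]
      by (cases "i \<le> j") (auto dest: sympD)
  qed
qed

lemma is_cycle_step:
  assumes "is_cycle T cs" "i < length cs"
  shows "T (cs ! i) (cs ! (Suc i mod length cs))"
proof (cases "Suc i < length cs")
  case False
  with assms have "i = length cs - 1" "cs \<noteq> []" by (auto simp: is_cycle_def)
  with assms show ?thesis by (simp add: is_cycle_def last_conv_nth hd_conv_nth)
qed (use assms in \<open>simp add: is_cycle_def\<close>)

lemma path_tree_acyclic: "\<not> is_cycle (path_tree n) cs"
proof
  assume cyc: "is_cycle (path_tree n) cs"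
  let ?L = "length cs"
  have L: "3 \<le> ?L" and dist: "distinct cs" using cyc by (auto simp: is_cycle_def)
  then have "Max (set cs) \<in> set cs" by (intro Max_in) auto
  then obtain q where q: "q < ?L" "cs ! q = Max (set cs)" by (auto simp: in_set_conv_nth)
  have below: "cs ! i = cs ! q - 1"
    if "i < ?L" "path_tree n (cs ! i) (cs ! q) \<or> path_tree n (cs ! q) (cs ! i)" for i
  proof -
    have "cs ! i \<le> cs ! q" using q that(1) by simp
    with that(2) show ?thesis by (auto simp: path_tree_def)
  qed
  \<comment> \<open>both cyclic neighbours of the largest entry are its predecessor in \<open>\<nat>\<close>\<close>
  define pred where "pred = (if q = 0 then ?L - 1 else q - 1)"
  have pred: "pred < ?L" "Suc pred mod ?L = q" using q L by (auto simp: pred_def)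
  have succ: "Suc q mod ?L < ?L" using L by (intro mod_less_divisor) linarith
  have "cs ! pred = cs ! (Suc q mod ?L)"
    using below[OF pred(1)] below[OF succ] is_cycle_step[OF cyc pred(1)]
      is_cycle_step[OF cyc q(1)] pred(2) by simp
  moreover have "pred \<noteq> Suc q mod ?L" using q L by (auto simp: pred_def mod_Suc)
  ultimately show False using dist pred(1) succ by (simp add: nth_eq_iff_index_eq)
qed

lemma is_tree_path_tree: "0 < n \<Longrightarrow> is_tree {..<n} (path_tree n)"
  unfolding is_tree_def simple_graph_def
  using connected_on_path_tree[of "{..<n}" n] path_tree_acyclic
  by (auto simp: path_tree_def)

definition path_decomposition :: "'a set \<Rightarrow> ('a \<Rightarrow> 'a \<Rightarrow> bool) \<Rightarrow> 'a set list \<Rightarrow> bool" where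
  "path_decomposition V E Bs \<longleftrightarrow> Bs \<noteq> [] \<and> \<Union>(set Bs) = V
     \<and> (\<forall>u v. E u v \<longrightarrow> (\<exists>B\<in>set Bs. u \<in> B \<and> v \<in> B))
     \<and> (\<forall>v i j l. i \<le> j \<longrightarrow> j \<le> l \<longrightarrow> l < length Bs \<longrightarrow> v \<in> Bs ! i \<longrightarrow> v \<in> Bs ! l \<longrightarrow> v \<in> Bs ! j)"

lemma tree_decomposition_path_decomposition:
  assumes "path_decomposition V E Bs"
  shows "tree_decomposition V E {..<length Bs} (path_tree (length Bs)) (nth Bs)"
  unfolding tree_decomposition_def
proof (intro conjI allI impI ballI)
  show "is_tree {..<length Bs} (path_tree (length Bs))"
    using assms by (intro is_tree_path_tree) (simp add: path_decomposition_def)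
  have "nth Bs ` {..<length Bs} = set Bs"
    using nth_image[of "length Bs" Bs] by (simp add: atLeast0LessThan)
  then show "(\<Union>i\<in>{..<length Bs}. Bs ! i) = V"
    using assms by (simp add: path_decomposition_def)
  show "\<exists>i\<in>{..<length Bs}. u \<in> Bs ! i \<and> v \<in> Bs ! i" if "E u v" for u v
    using assms that by (fastforce simp: path_decomposition_def in_set_conv_nth)
  show "connected_on {i \<in> {..<length Bs}. v \<in> Bs ! i} (path_tree (length Bs))" for v
    using assms by (intro connected_on_path_tree) (auto simp: path_decomposition_def)
qed

lemma treewidth_le_path_decomposition:
  assumes pd: "path_decomposition V E Bs" and bags: "\<forall>B\<in>set Bs. card B \<le> K"
  shows "treewidth V E \<le> K - 1"
proof -
  have "treewidth V E \<le> decomposition_width {..<length Bs} (nth Bs)"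
    unfolding treewidth_def using tree_decomposition_path_decomposition[OF pd]
    by (blast intro: Least_le)
  also have "\<dots> \<le> K - 1"
    using pd bags unfolding decomposition_width_def path_decomposition_def
    by (intro diff_le_mono Max.boundedI) auto
  finally show ?thesis .
qed

lemma path_decomposition_append:
  assumes pd1: "path_decomposition A E1 Bs" and pd2: "path_decomposition B E2 Cs"
    and disj: "A \<inter> B = {}" and E: "\<And>u v. E u v \<Longrightarrow> E1 u v \<or> E2 u v"
  shows "path_decomposition (A \<union> B) E (Bs @ Cs)"
  unfolding path_decomposition_def
proof (intro conjI allI impI)
  show "Bs @ Cs \<noteq> []" "\<Union>(set (Bs @ Cs)) = A \<union> B"
    using pd1 pd2 by (auto simp: path_decomposition_def)
  show "\<exists>X\<in>set (Bs @ Cs). u \<in> X \<and> v \<in> X" if "E u v" for u v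
    using E[OF that] pd1 pd2 unfolding path_decomposition_def set_append bex_Un by blast
  fix v i j l
  assume ij: "i \<le> j" "j \<le> l" "l < length (Bs @ Cs)" and v: "v \<in> (Bs @ Cs) ! i" "v \<in> (Bs @ Cs) ! l"
  have convex1: "\<And>i j l. i \<le> j \<Longrightarrow> j \<le> l \<Longrightarrow> l < length Bs \<Longrightarrow> v \<in> Bs ! i \<Longrightarrow> v \<in> Bs ! l \<Longrightarrow> v \<in> Bs ! j"
    using pd1 by (simp add: path_decomposition_def)
  have convex2: "\<And>i j l. i \<le> j \<Longrightarrow> j \<le> l \<Longrightarrow> l < length Cs \<Longrightarrow> v \<in> Cs ! i \<Longrightarrow> v \<in> Cs ! l \<Longrightarrow> v \<in> Cs ! j"
    using pd2 by (simp add: path_decomposition_def)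
  consider "l < length Bs" | "length Bs \<le> i" | "i < length Bs" "length Bs \<le> l" by linarith
  then show "v \<in> (Bs @ Cs) ! j"
  proof cases
    case 1
    with ij v convex1[of i j l] show ?thesis by (simp add: nth_append)
  next
    case 2
    with ij v convex2[of "i - length Bs" "j - length Bs" "l - length Bs"] show ?thesis
      by (simp add: nth_append)
  next
    case 3
    with v ij have "v \<in> Bs ! i" "i < length Bs" "v \<in> Cs ! (l - length Bs)" "l - length Bs < length Cs"
      by (simp_all add: nth_append)
    then have "v \<in> A" "v \<in> B"
      using pd1 pd2 unfolding path_decomposition_def by (meson UnionI nth_mem)+
    with disj show ?thesis by blast
  qed
qed

lemma path_within_refl: "x \<in> S \<Longrightarrow> path_within E S x x"
  by (simp add: path_within_def)

lemma path_within_edge: "x \<in> S \<Longrightarrow> y \<in> S \<Longrightarrow> E x y \<Longrightarrow> path_within E S x y"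
  by (auto simp: path_within_def)

lemma path_within_trans: "path_within E S x y \<Longrightarrow> path_within E S y z \<Longrightarrow> path_within E S x z"
  by (auto simp: path_within_def)

lemma path_within_sym:
  assumes "symp E" "path_within E S x y"
  shows "path_within E S y x"
proof -
  have "symp (\<lambda>a b. E a b \<and> a \<in> S \<and> b \<in> S)" using assms(1) by (auto simp: symp_def)
  with assms(2) show ?thesis by (auto simp: path_within_def symp_rtranclp sympD)
qed

lemma path_within_mono:
  assumes "path_within E S x y" "\<And>a b. E a b \<Longrightarrow> a \<in> S \<Longrightarrow> b \<in> S \<Longrightarrow> E' a b" "S \<subseteq> S'"
  shows "path_within E' S' x y"
proof -
  have "(\<lambda>a b. E a b \<and> a \<in> S \<and> b \<in> S)\<^sup>*\<^sup>* x y" using assms(1) by (simp add: path_within_def)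
  then have "(\<lambda>a b. E' a b \<and> a \<in> S' \<and> b \<in> S')\<^sup>*\<^sup>* x y"
    by (rule rtranclp_mono[THEN predicate2D, rotated]) (use assms in auto)
  with assms show ?thesis by (auto simp: path_within_def)
qed

lemma path_within_shrink:
  assumes "path_within E S x y" and reach: "\<And>z. path_within E S x z \<Longrightarrow> z \<in> S'"
  shows "path_within E S' x y"
proof -
  have "x \<in> S" and walk: "(\<lambda>a b. E a b \<and> a \<in> S \<and> b \<in> S)\<^sup>*\<^sup>* x y"
    using assms(1) by (auto simp: path_within_def)
  from walk have "path_within E S' x y"
  proof (induction rule: rtranclp_induct)
    case base
    then show ?case using reach path_within_refl[OF \<open>x \<in> S\<close>] by (simp add: path_within_def)
  next
    case (step y z)
    then have "path_within E S x z"
      using \<open>x \<in> S\<close> by (auto simp: path_within_def intro: rtranclp.rtrancl_into_rtrancl)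
    then have "z \<in> S'" by (rule reach)
    moreover have "y \<in> S'" using step.IH by (simp add: path_within_def)
    ultimately have "path_within E S' y z" using step.hyps(2) by (simp add: path_within_edge)
    with step.IH show ?case by (rule path_within_trans)
  qed
  then show ?thesis .
qed

lemma simple_graph_symp: "simple_graph V E \<Longrightarrow> symp E"
  by (simp add: simple_graph_def symp_def)

lemma closed_nbhd_iff: "simple_graph V E \<Longrightarrow> u \<in> closed_nbhd V E w \<longleftrightarrow> u = w \<or> E w u"
  by (auto simp: closed_nbhd_def simple_graph_def)

lemma closed_nbhd_commute:
  "simple_graph V E \<Longrightarrow> u \<in> closed_nbhd V E w \<longleftrightarrow> w \<in> closed_nbhd V E u"
  by (auto simp: closed_nbhd_iff simple_graph_def)

lemma path_within_closed_nbhd: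
  "simple_graph V E \<Longrightarrow> x \<in> S \<Longrightarrow> y \<in> S \<Longrightarrow> y \<in> closed_nbhd V E x \<Longrightarrow> path_within E S x y"
  by (auto simp: closed_nbhd_iff path_within_refl path_within_edge)

lemma path_within_walk:
  assumes "\<And>i. i < k \<Longrightarrow> E (p i) (p (Suc i))" "\<And>i. i \<le> k \<Longrightarrow> p i \<in> S"
  shows "path_within E S (p 0) (p k)"
  using assms
proof (induction k)
  case 0
  then show ?case by (simp add: path_within_refl)
next
  case (Suc k)
  then have "path_within E S (p 0) (p k)" by simp
  moreover have "path_within E S (p k) (p (Suc k))" using Suc.prems by (intro path_within_edge) simp_all
  ultimately show ?case by (rule path_within_trans)
qed

lemma closed_nbhd_walk:
  assumes sg: "simple_graph V E" and u: "u \<in> closed_nbhd V E v"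
  shows "\<exists>m\<le>1. (E ^^ m) v u \<and> (E ^^ m) u v"
proof (cases "u = v")
  case True
  then show ?thesis by (intro exI[of _ 0]) simp
next
  case False
  with u sg have "E v u" "E u v" by (auto simp: closed_nbhd_iff simple_graph_def)
  then show ?thesis by (metis relpowp_1 order_refl)
qed

lemma card_closed_nbhd_le:
  assumes "finite V" "degree V E x \<le> D"
  shows "card (closed_nbhd V E x) \<le> D + 1"
  using assms by (simp add: closed_nbhd_def degree_def card_insert_if)

lemma card_closed_nbhds_edge_le:
  assumes sg: "simple_graph V E" and xy: "E x y"
    and deg: "degree V E x \<le> D" "degree V E y \<le> D"
  shows "card (closed_nbhd V E x \<union> closed_nbhd V E y) \<le> 2 * D"
proof -
  have fin: "finite V" using sg by (simp add: simple_graph_def)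
  have "closed_nbhd V E x \<union> closed_nbhd V E y \<subseteq> {u \<in> V. E x u} \<union> {u \<in> V. E y u}"
    using sg xy by (auto simp: closed_nbhd_def simple_graph_def)
  then have "card (closed_nbhd V E x \<union> closed_nbhd V E y) \<le> card ({u \<in> V. E x u} \<union> {u \<in> V. E y u})"
    using fin by (intro card_mono) auto
  also have "\<dots> \<le> card {u \<in> V. E x u} + card {u \<in> V. E y u}" by (rule card_Un_le)
  finally show ?thesis using deg by (simp add: degree_def)
qed

lemma card_closed_nbhds_path3_le:
  assumes sg: "simple_graph V E" and xy: "E x y" and yz: "E y z"
    and deg: "degree V E x \<le> D" "degree V E y \<le> D" "degree V E z \<le> D"
  shows "card (closed_nbhd V E x \<union> closed_nbhd V E y \<union> closed_nbhd V E z) \<le> 3 * D - 1"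
proof -
  let ?A = "{u \<in> V. E x u}" and ?B = "{u \<in> V. E y u}" and ?C = "{u \<in> V. E z u}"
  have fin: "finite V" using sg by (simp add: simple_graph_def)
  have sub: "closed_nbhd V E x \<union> closed_nbhd V E y \<union> closed_nbhd V E z \<subseteq> (?A \<union> ?C) \<union> ?B"
    using sg xy yz by (auto simp: closed_nbhd_def simple_graph_def)
  have "y \<in> ?A \<inter> ?C" using sg xy yz by (auto simp: simple_graph_def)
  then have "card {y} \<le> card (?A \<inter> ?C)" using fin by (intro card_mono) auto
  moreover have "card ?A + card ?C = card (?A \<union> ?C) + card (?A \<inter> ?C)"
    using fin by (intro card_Un_Int) simp_all
  ultimately have "card (?A \<union> ?C) + card ?B \<le> 3 * D - 1"
    using deg by (simp add: degree_def)
  moreover have "card (closed_nbhd V E x \<union> closed_nbhd V E y \<union> closed_nbhd V E z) \<le> card (?A \<union> ?C) + card ?B"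
    using card_mono[OF _ sub] card_Un_le[of "?A \<union> ?C" ?B] fin by simp
  ultimately show ?thesis by linarith
qed

definition induced :: "('a \<Rightarrow> 'a \<Rightarrow> bool) \<Rightarrow> 'a set \<Rightarrow> 'a \<Rightarrow> 'a \<Rightarrow> bool" where
  "induced E S u v \<longleftrightarrow> E u v \<and> u \<in> S \<and> v \<in> S"

lemma simple_graph_induced: "simple_graph V E \<Longrightarrow> S \<subseteq> V \<Longrightarrow> simple_graph S (induced E S)"
  by (auto simp: simple_graph_def induced_def finite_subset)

lemma degree_induced_le:
  assumes "simple_graph V E" "S \<subseteq> V"
  shows "degree S (induced E S) v \<le> degree V E v"
  unfolding degree_def using assms by (intro card_mono) (auto simp: simple_graph_def induced_def)

lemma AT_free_induced:
  assumes at: "AT_free V E" and S: "S \<subseteq> V"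
  shows "AT_free S (induced E S)"
proof -
  have avoids: "avoids_path V E a b z" if "avoids_path S (induced E S) a b z" "z \<in> S" for a b z
  proof -
    have "path_within (induced E S) (S - closed_nbhd S (induced E S) z) a b"
      using that(1) by (simp add: avoids_path_def)
    then have "path_within E (V - closed_nbhd V E z) a b"
      by (rule path_within_mono) (use S that(2) in \<open>auto simp: closed_nbhd_def induced_def\<close>)
    then show ?thesis by (simp add: avoids_path_def)
  qed
  have "asteroidal_triple V E x y z" if "asteroidal_triple S (induced E S) x y z" for x y z
    using that avoids S unfolding asteroidal_triple_def by (auto simp: induced_def)
  with at show ?thesis by (auto simp: AT_free_def)
qed

lemma connected_on_component:
  assumes "symp E"
  shows "connected_on {v. E\<^sup>*\<^sup>* x v} (induced E {v. E\<^sup>*\<^sup>* x v})"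
proof -
  let ?C = "{v. E\<^sup>*\<^sup>* x v}"
  let ?R = "\<lambda>u v. induced E ?C u v \<and> u \<in> ?C \<and> v \<in> ?C"
  have from_x: "?R\<^sup>*\<^sup>* x v" if "E\<^sup>*\<^sup>* x v" for v
    using that
  proof (induction rule: rtranclp_induct)
    case (step y z)
    have "y \<in> ?C" "z \<in> ?C" using step.hyps rtranclp.rtrancl_into_rtrancl[OF step.hyps] by simp_all
    with step.hyps(2) have "?R y z" by (simp add: induced_def)
    with step.IH show ?case by (rule rtranclp.rtrancl_into_rtrancl[of ?R])
  qed simp
  have "symp ?R" using assms by (auto simp: symp_def induced_def)
  show ?thesis
    unfolding connected_on_def
  proof (intro ballI)
    fix a b assume a: "a \<in> ?C" and b: "b \<in> ?C"
    have xa: "?R\<^sup>*\<^sup>* x a" using a by (intro from_x) simp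
    have xb: "?R\<^sup>*\<^sup>* x b" using b by (intro from_x) simp
    have "symp ?R\<^sup>*\<^sup>*" using \<open>symp ?R\<close> by (rule symp_rtranclp)
    then have "?R\<^sup>*\<^sup>* a x" using xa by (rule sympD)
    from this xb show "?R\<^sup>*\<^sup>* a b" by (rule rtranclp_trans)
  qed
qed

definition component_avoiding :: "'a set \<Rightarrow> ('a \<Rightarrow> 'a \<Rightarrow> bool) \<Rightarrow> 'a \<Rightarrow> 'a \<Rightarrow> 'a set" where
  "component_avoiding V E a b = {v. path_within E (V - closed_nbhd V E a) b v}"

lemma component_avoiding_subset: "component_avoiding V E a b \<subseteq> V"
  by (auto simp: component_avoiding_def path_within_def)

lemma component_avoiding_not_mem: "a \<notin> component_avoiding V E a b"
  by (auto simp: component_avoiding_def path_within_def closed_nbhd_def)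

lemma component_avoiding_mono:
  assumes sg: "simple_graph V E"
    and w: "w \<in> V - closed_nbhd V E a" "w \<notin> component_avoiding V E a b"
  shows "component_avoiding V E a b \<subseteq> component_avoiding V E w b"
proof
  fix v assume "v \<in> component_avoiding V E a b"
  then have "path_within E (V - closed_nbhd V E a) b v" by (simp add: component_avoiding_def)
  then have "path_within E (V - closed_nbhd V E w) b v"
  proof (rule path_within_shrink)
    fix c assume c: "path_within E (V - closed_nbhd V E a) b c"
    have "c \<notin> closed_nbhd V E w"
    proof
      assume "c \<in> closed_nbhd V E w"
      then have "w \<in> closed_nbhd V E c" by (rule closed_nbhd_commute[OF sg, THEN iffD1])
      then have "c = w \<or> E c w" by (auto simp: closed_nbhd_iff[OF sg])
      have "path_within E (V - closed_nbhd V E a) b w"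
      proof (cases "c = w")
        case False
        with \<open>c = w \<or> E c w\<close> c w(1) have "path_within E (V - closed_nbhd V E a) c w"
          by (intro path_within_edge) (auto simp: path_within_def)
        with c show ?thesis by (rule path_within_trans)
      qed (use c in simp)
      with w(2) show False by (simp add: component_avoiding_def)
    qed
    with c show "c \<in> V - closed_nbhd V E w" by (auto simp: path_within_def)
  qed
  then show "v \<in> component_avoiding V E w b" by (simp add: component_avoiding_def)
qed

lemma AT_free_component_grows:
  assumes sg: "simple_graph V E" and at: "AT_free V E"
    and V: "x \<in> V" "y \<in> V" "w \<in> V" and xy: "y \<notin> closed_nbhd V E x"
    and avoid: "path_within E (V - closed_nbhd V E w) x y"
  shows "component_avoiding V E x y \<subset> component_avoiding V E w y
    \<or> (component_avoiding V E x w = component_avoiding V E x y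
       \<and> component_avoiding V E y x \<subset> component_avoiding V E w x)"
proof -
  have symp: "symp E" using sg by (rule simple_graph_symp)
  have "x \<notin> closed_nbhd V E w" "y \<notin> closed_nbhd V E w"
    using avoid by (auto simp: path_within_def)
  then have wx: "w \<notin> closed_nbhd V E x" and wy: "w \<notin> closed_nbhd V E y"
    using closed_nbhd_commute[OF sg, of x w] closed_nbhd_commute[OF sg, of y w] by blast+
  have "x \<noteq> y \<and> \<not> E x y" "y \<noteq> w \<and> \<not> E y w" "x \<noteq> w \<and> \<not> E x w"
    using xy wy wx by (auto simp: closed_nbhd_iff[OF sg])
  moreover have "avoids_path V E x y w" using avoid by (simp add: avoids_path_def)
  moreover have "\<not> asteroidal_triple V E x y w" using at by (simp add: AT_free_def)
  ultimately have "\<not> avoids_path V E y w x \<or> \<not> avoids_path V E x w y"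
    using V unfolding asteroidal_triple_def by blast
  then have no_yw_or_xw: "\<not> path_within E (V - closed_nbhd V E x) y w
      \<or> \<not> path_within E (V - closed_nbhd V E y) x w"
    by (simp add: avoids_path_def)
  show ?thesis
  proof (cases "path_within E (V - closed_nbhd V E x) y w")
    case False
    then have "w \<notin> component_avoiding V E x y" by (simp add: component_avoiding_def)
    with V(3) wx have "component_avoiding V E x y \<subseteq> component_avoiding V E w y"
      by (intro component_avoiding_mono[OF sg]) simp_all
    moreover have "x \<in> component_avoiding V E w y"
      using path_within_sym[OF symp avoid] by (simp add: component_avoiding_def)
    ultimately show ?thesis using component_avoiding_not_mem[of x V E y] by blast
  next
    case True
    with no_yw_or_xw have "w \<notin> component_avoiding V E y x" by (simp add: component_avoiding_def)
    with V(3) wy have "component_avoiding V E y x \<subseteq> component_avoiding V E w x"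
      by (intro component_avoiding_mono[OF sg]) simp_all
    moreover have "y \<in> component_avoiding V E w x"
      using avoid by (simp add: component_avoiding_def)
    moreover have "component_avoiding V E x w = component_avoiding V E x y"
      unfolding component_avoiding_def
      using path_within_trans[OF True] path_within_trans[OF path_within_sym[OF symp True]] by blast
    ultimately show ?thesis using component_avoiding_not_mem[of y V E x] by blast
  qed
qed

\<comment> \<open>the lexicographic order on the two component sizes, encoded in base \<open>card V + 1\<close>\<close>
definition pair_weight :: "'a set \<Rightarrow> ('a \<Rightarrow> 'a \<Rightarrow> bool) \<Rightarrow> 'a \<Rightarrow> 'a \<Rightarrow> nat" where
  "pair_weight V E x y =
     card (component_avoiding V E x y) * (card V + 1) + card (component_avoiding V E y x)"

lemma AT_free_pair_weight_grows:
  assumes sg: "simple_graph V E" and at: "AT_free V E"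
    and V: "x \<in> V" "y \<in> V" "w \<in> V" and xy: "y \<notin> closed_nbhd V E x"
    and avoid: "path_within E (V - closed_nbhd V E w) x y"
  shows "pair_weight V E x y < pair_weight V E w y \<or> pair_weight V E x y < pair_weight V E x w"
proof -
  let ?C = "component_avoiding V E"
  have finV: "finite V" using sg by (simp add: simple_graph_def)
  have finC: "finite (?C a b)" for a b using finite_subset[OF component_avoiding_subset finV] .
  have card_C: "card (?C a b) \<le> card V" for a b
    using finV component_avoiding_subset by (rule card_mono)
  from AT_free_component_grows[OF sg at V xy avoid]
  consider "?C x y \<subset> ?C w y" | "?C x w = ?C x y" "?C y x \<subset> ?C w x" by blast
  then show ?thesis
  proof cases
    case 1
    then have "card (?C x y) < card (?C w y)" by (rule psubset_card_mono[OF finC])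
    then have "(card (?C x y) + 1) * (card V + 1) \<le> card (?C w y) * (card V + 1)"
      by (intro mult_le_mono1) simp
    with card_C[of y x] show ?thesis by (simp add: pair_weight_def)
  next
    case 2
    then have "card (?C y x) < card (?C w x)" by (intro psubset_card_mono[OF finC])
    with 2 show ?thesis by (simp add: pair_weight_def)
  qed
qed

lemma AT_free_dominating_pair:
  assumes sg: "simple_graph V E" and at: "AT_free V E" and ne: "V \<noteq> {}"
  shows "\<exists>x\<in>V. \<exists>y\<in>V. \<forall>w\<in>V. \<not> path_within E (V - closed_nbhd V E w) x y"
proof (cases "\<exists>x\<in>V. \<exists>y\<in>V. y \<notin> closed_nbhd V E x")
  case False
  obtain x where "x \<in> V" using ne by blast
  with False show ?thesis by (auto simp: path_within_def)
next
  case True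
  define P where "P = {(x, y) \<in> V \<times> V. y \<notin> closed_nbhd V E x}"
  let ?f = "\<lambda>(x, y). pair_weight V E x y"
  have "P \<subseteq> V \<times> V" by (auto simp: P_def)
  then have "finite P" using sg by (simp add: simple_graph_def finite_subset)
  moreover have "P \<noteq> {}" using True by (auto simp: P_def)
  ultimately have "Max (?f ` P) \<in> ?f ` P" and max: "\<And>q. q \<in> P \<Longrightarrow> ?f q \<le> Max (?f ` P)"
    by simp_all
  then obtain x y where xy: "(x, y) \<in> P" "?f (x, y) = Max (?f ` P)" by auto
  then have V: "x \<in> V" "y \<in> V" and xy': "y \<notin> closed_nbhd V E x" by (auto simp: P_def)
  have "\<not> path_within E (V - closed_nbhd V E w) x y" if w: "w \<in> V" for w
  proof
    assume avoid: "path_within E (V - closed_nbhd V E w) x y"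
    then have "w \<notin> closed_nbhd V E x" "w \<notin> closed_nbhd V E y" "y \<notin> closed_nbhd V E w"
      using closed_nbhd_commute[OF sg, of x w] closed_nbhd_commute[OF sg, of y w]
      by (auto simp: path_within_def)
    then have "(w, y) \<in> P" "(x, w) \<in> P" using V w by (auto simp: P_def)
    then have "pair_weight V E w y \<le> pair_weight V E x y" "pair_weight V E x w \<le> pair_weight V E x y"
      using max xy(2) by fastforce+
    with AT_free_pair_weight_grows[OF sg at V w xy' avoid] show False by linarith
  qed
  with V show ?thesis by blast
qed

locale shortest_path =
  fixes V :: "'a set" and E :: "'a \<Rightarrow> 'a \<Rightarrow> bool" and p :: "nat \<Rightarrow> 'a" and k :: nat
  assumes simple: "simple_graph V E"
    and start_in_V: "p 0 \<in> V"
    and path_edge: "\<And>i. i < k \<Longrightarrow> E (p i) (p (Suc i))"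
    and shortest: "\<And>m. (E ^^ m) (p 0) (p k) \<Longrightarrow> k \<le> m"
begin

abbreviation nbhd :: "'a \<Rightarrow> 'a set" where
  "nbhd \<equiv> closed_nbhd V E"

lemma path_vertex_in_V: "i \<le> k \<Longrightarrow> p i \<in> V"
proof (cases i)
  case (Suc j)
  moreover assume "i \<le> k"
  ultimately show ?thesis using path_edge[of j] simple by (auto simp: simple_graph_def)
qed (use start_in_V in simp)

lemma walk_along_path: "i \<le> j \<Longrightarrow> j \<le> k \<Longrightarrow> (E ^^ (j - i)) (p i) (p j)"
  unfolding relpowp_fun_conv by (intro exI[of _ "\<lambda>t. p (i + t)"]) (auto intro: path_edge)

lemma index_le_walk:
  assumes "b \<le> k" "(E ^^ m) (p a) (p b)"
  shows "b \<le> a + m"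
proof (cases "a \<le> b")
  case True
  have "(E ^^ (a - 0 + m + (k - b))) (p 0) (p k)"
    using walk_along_path[of 0 a] assms walk_along_path[of b k] True
    by (meson relpowp_trans le0 order.refl order_trans)
  with shortest have "k \<le> a + m + (k - b)" by simp
  with assms(1) show ?thesis by linarith
qed simp

lemma index_le_nbhd_walk:
  assumes "b \<le> k" "u \<in> nbhd (p a)" "(E ^^ m) u (p b)"
  shows "b \<le> a + m + 1"
proof -
  obtain l where "l \<le> 1" "(E ^^ l) (p a) u" using closed_nbhd_walk[OF simple assms(2)] by blast
  with assms(3) have "(E ^^ (l + m)) (p a) (p b)" by (blast intro: relpowp_trans)
  with assms(1) \<open>l \<le> 1\<close> show ?thesis using index_le_walk by fastforce
qed

lemma path_vertex_not_in_nbhd: "i + 2 \<le> j \<Longrightarrow> j \<le> k \<Longrightarrow> p j \<notin> nbhd (p i)"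
  using index_le_nbhd_walk[of j "p j" i 0] by auto

lemma common_nbhd_index_le:
  assumes "j \<le> k" "v \<in> nbhd (p i)" "v \<in> nbhd (p j)"
  shows "j \<le> i + 2"
proof -
  obtain l where "l \<le> 1" "(E ^^ l) v (p j)" using closed_nbhd_walk[OF simple assms(3)] by blast
  with assms index_le_nbhd_walk[of j v i l] show ?thesis by simp
qed

lemma edge_nbhd_index_le:
  assumes "b \<le> k" "u \<in> nbhd (p a)" "v \<in> nbhd (p b)" "E u v"
  shows "b \<le> a + 3"
proof -
  obtain l where l: "l \<le> 1" and walk: "(E ^^ l) v (p b)"
    using closed_nbhd_walk[OF simple assms(3)] by blast
  from assms(4) walk have "(E ^^ Suc l) u (p b)" by (rule relpowp_Suc_I2)
  with assms index_le_nbhd_walk[of b u a "Suc l"] l show ?thesis by simp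
qed

lemma AT_free_edge_nbhd:
  assumes at: "AT_free V E" and a: "a + 3 \<le> k"
    and u: "u \<in> nbhd (p a)" "u \<notin> nbhd (p (a + 2))" and uv: "E u v" and v: "v \<in> nbhd (p (a + 3))"
  shows "\<exists>j\<le>2. v \<in> nbhd (p (a + j))"
  \<comment> \<open>otherwise \<open>p a\<close>, \<open>p (a + 2)\<close>, \<open>v\<close> is an asteroidal triple\<close>
proof (rule ccontr)
  assume "\<not> ?thesis"
  then have "\<And>j. j \<le> 2 \<Longrightarrow> v \<notin> nbhd (p (a + j))" by blast
  from this[of 0] this[of 1] this[of 2]
  have v0: "v \<notin> nbhd (p a)" and v1: "v \<notin> nbhd (p (a + 1))" and v2: "v \<notin> nbhd (p (a + 2))"
    by simp_all
  have in_V: "p a \<in> V" "p (a + 1) \<in> V" "p (a + 2) \<in> V" "p (a + 3) \<in> V" "u \<in> V" "v \<in> V"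
    using a path_vertex_in_V uv simple by (auto simp: simple_graph_def)
  have edges: "E (p a) (p (a + 1))" "E (p (a + 1)) (p (a + 2))" "E (p (a + 2)) (p (a + 3))"
    using a path_edge[of a] path_edge[of "a + 1"] path_edge[of "a + 2"] by (simp_all add: eval_nat_numeral)
  have far: "p (a + 2) \<notin> nbhd (p a)" "p (a + 3) \<notin> nbhd (p a)" "p a \<notin> nbhd (p (a + 2))"
    using a path_vertex_not_in_nbhd[of a "a + 2"] path_vertex_not_in_nbhd[of a "a + 3"]
      closed_nbhd_commute[OF simple, of "p a" "p (a + 2)"] by auto
  have v_far: "p a \<notin> nbhd v" "p (a + 1) \<notin> nbhd v" "p (a + 2) \<notin> nbhd v"
    using v0 v1 v2 closed_nbhd_commute[OF simple, of v] by blast+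
  have "path_within E (V - nbhd v) (p a) (p (a + 1))" "path_within E (V - nbhd v) (p (a + 1)) (p (a + 2))"
    using edges in_V v_far by (simp_all add: path_within_edge)
  then have "path_within E (V - nbhd v) (p a) (p (a + 2))" by (rule path_within_trans)
  then have avoid_v: "avoids_path V E (p a) (p (a + 2)) v" by (simp add: avoids_path_def)
  have "E (p (a + 3)) v"
    using v v2 edges(3) by (auto simp: closed_nbhd_iff[OF simple])
  then have "path_within E (V - nbhd (p a)) (p (a + 2)) (p (a + 3))" "path_within E (V - nbhd (p a)) (p (a + 3)) v"
    using edges in_V far v0 by (simp_all add: path_within_edge)
  then have "path_within E (V - nbhd (p a)) (p (a + 2)) v" by (rule path_within_trans)
  then have avoid_pa: "avoids_path V E (p (a + 2)) v (p a)" by (simp add: avoids_path_def)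
  have "path_within E (V - nbhd (p (a + 2))) (p a) u" "path_within E (V - nbhd (p (a + 2))) u v"
    using path_within_closed_nbhd[OF simple] path_within_edge[of u _ v E] uv in_V u v2 far(3)
    by simp_all
  then have "path_within E (V - nbhd (p (a + 2))) (p a) v" by (rule path_within_trans)
  then have avoid_pa2: "avoids_path V E (p a) v (p (a + 2))" by (simp add: avoids_path_def)
  have "asteroidal_triple V E (p a) (p (a + 2)) v"
    unfolding asteroidal_triple_def
    using in_V far(1) v0 v2 avoid_v avoid_pa avoid_pa2 by (auto simp: closed_nbhd_iff[OF simple])
  with at show False by (simp add: AT_free_def)
qed

definition bag :: "nat \<Rightarrow> 'a set" where
  "bag i = (\<Union>j\<in>{i..min k (i + 2)}. nbhd (p j))"

\<comment> \<open>windows start at \<open>0, \<dots>, k - 2\<close>; a single window when \<open>k \<le> 2\<close>\<close>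
definition bags :: "'a set list" where
  "bags = map bag [0..<max 1 (k - 1)]"

lemma mem_bag_iff: "v \<in> bag i \<longleftrightarrow> (\<exists>j. i \<le> j \<and> j \<le> i + 2 \<and> j \<le> k \<and> v \<in> nbhd (p j))"
  by (auto simp: bag_def)

lemma set_bags: "set bags = bag ` {..<max 1 (k - 1)}"
  by (auto simp: bags_def)

lemma nbhds_in_common_bag:
  assumes "a \<le> b" "b \<le> a + 2" "b \<le> k" "u \<in> nbhd (p a)" "v \<in> nbhd (p b)"
  shows "\<exists>B\<in>set bags. u \<in> B \<and> v \<in> B"
proof -
  define i where "i = min a (max 1 (k - 1) - 1)"
  have i: "i < max 1 (k - 1)" "i \<le> a" "b \<le> i + 2" using assms(1-3) by (auto simp: i_def)
  have "u \<in> bag i" unfolding mem_bag_iff using i assms by (intro exI[of _ a]) auto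
  moreover have "v \<in> bag i" unfolding mem_bag_iff using i assms by (intro exI[of _ b]) auto
  moreover have "bag i \<in> set bags" using i(1) by (simp add: set_bags)
  ultimately show ?thesis by blast
qed

lemma bag_convex:
  assumes "v \<in> bag i" "v \<in> bag l" "i \<le> j" "j \<le> l"
  shows "v \<in> bag j"
proof -
  obtain s where s: "i \<le> s" "s \<le> i + 2" "s \<le> k" "v \<in> nbhd (p s)" using assms(1) by (auto simp: mem_bag_iff)
  obtain t where t: "l \<le> t" "t \<le> l + 2" "t \<le> k" "v \<in> nbhd (p t)" using assms(2) by (auto simp: mem_bag_iff)
  show ?thesis
  proof (cases "j \<le> s")
    case True
    with s assms(3) show ?thesis unfolding mem_bag_iff by (intro exI[of _ s]) auto
  next
    case False
    have "t \<le> s + 2" using common_nbhd_index_le[OF t(3) s(4) t(4)] .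
    with False t assms(4) show ?thesis unfolding mem_bag_iff by (intro exI[of _ t]) auto
  qed
qed

lemma card_bag:
  assumes deg: "\<And>v. v \<in> V \<Longrightarrow> degree V E v \<le> D" and D: "1 \<le> D" and i: "i < max 1 (k - 1)"
  shows "card (bag i) \<le> 3 * D - 1"
proof -
  have deg_path: "degree V E (p j) \<le> D" if "j \<le> k" for j
    using deg path_vertex_in_V that by blast
  consider "i + 2 \<le> k" | "k = 1" "i = 0" | "k = 0" "i = 0" using i by linarith
  then show ?thesis
  proof cases
    case 1
    then have "{i..min k (i + 2)} = {i, i + 1, i + 2}" by auto
    then have "bag i = nbhd (p i) \<union> nbhd (p (i + 1)) \<union> nbhd (p (i + 2))"
      unfolding bag_def by auto
    moreover have "E (p i) (p (i + 1))" "E (p (i + 1)) (p (i + 2))"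
      using 1 path_edge[of i] path_edge[of "i + 1"] by simp_all
    ultimately show ?thesis
      using 1 card_closed_nbhds_path3_le[OF simple _ _ deg_path deg_path deg_path] by simp
  next
    case 2
    then have "bag i = nbhd (p 0) \<union> nbhd (p 1)" unfolding bag_def by (auto simp: le_Suc_eq)
    with 2 have "card (bag i) \<le> 2 * D"
      using path_edge[of 0] deg_path by (auto intro!: card_closed_nbhds_edge_le[OF simple])
    with D show ?thesis by linarith
  next
    case 3
    have "bag i = nbhd (p 0)" unfolding bag_def using 3 by simp
    then have "card (bag i) \<le> D + 1"
      using simple card_closed_nbhd_le[OF _ deg_path[of 0]] by (simp add: simple_graph_def)
    with D show ?thesis by linarith
  qed
qed

lemma edge_in_bag_ordered:
  assumes at: "AT_free V E" and ab: "a \<le> b" "b \<le> k"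
    and u: "u \<in> nbhd (p a)" and v: "v \<in> nbhd (p b)" and uv: "E u v"
  shows "\<exists>B\<in>set bags. u \<in> B \<and> v \<in> B"
proof -
  have "b \<le> a + 3" using edge_nbhd_index_le[OF ab(2) u v uv] .
  then consider "b \<le> a + 2" | "b = a + 3" "u \<in> nbhd (p (a + 2))" | "b = a + 3" "u \<notin> nbhd (p (a + 2))"
    by (cases "b \<le> a + 2") auto
  then show ?thesis
  proof cases
    case 1
    with ab u v show ?thesis by (intro nbhds_in_common_bag) simp_all
  next
    case 2
    with ab u v show ?thesis by (intro nbhds_in_common_bag[of "a + 2" b]) simp_all
  next
    case 3
    with at ab u v uv obtain j where "j \<le> 2" "v \<in> nbhd (p (a + j))"
      using AT_free_edge_nbhd[of a u v] by auto
    with 3 ab u show ?thesis by (intro nbhds_in_common_bag[of a "a + j"]) simp_all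
  qed
qed

end

locale dominating_shortest_path = shortest_path +
  assumes dominating: "\<And>w. w \<in> V \<Longrightarrow> \<exists>j\<le>k. w \<in> closed_nbhd V E (p j)"
begin

lemma edge_in_bag:
  assumes at: "AT_free V E" and uv: "E u v"
  shows "\<exists>B\<in>set bags. u \<in> B \<and> v \<in> B"
proof -
  have "u \<in> V" "v \<in> V" using uv simple by (auto simp: simple_graph_def)
  then obtain a b where a: "a \<le> k" "u \<in> nbhd (p a)" and b: "b \<le> k" "v \<in> nbhd (p b)"
    using dominating by blast
  show ?thesis
  proof (cases "a \<le> b")
    case True
    with at a b uv show ?thesis by (intro edge_in_bag_ordered) simp_all
  next
    case False
    have "E v u" using uv simple by (simp add: simple_graph_def)
    with False at a b edge_in_bag_ordered[of b a v u] show ?thesis by auto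
  qed
qed

lemma path_decomposition_bags:
  assumes at: "AT_free V E"
  shows "path_decomposition V E bags"
  unfolding path_decomposition_def
proof (intro conjI allI impI)
  show "bags \<noteq> []" by (simp add: bags_def)
  have "bag i \<subseteq> V" for i
    using path_vertex_in_V by (auto simp: mem_bag_iff closed_nbhd_def)
  moreover have "w \<in> \<Union>(set bags)" if w: "w \<in> V" for w
  proof -
    obtain j where "j \<le> k" "w \<in> nbhd (p j)" using dominating[OF w] by blast
    then have "\<exists>B\<in>set bags. w \<in> B \<and> w \<in> B" by (intro nbhds_in_common_bag[of j j]) simp_all
    then show ?thesis by blast
  qed
  ultimately show "\<Union>(set bags) = V" unfolding set_bags by blast
  show "\<exists>B\<in>set bags. u \<in> B \<and> v \<in> B" if "E u v" for u v
    using edge_in_bag[OF at that] .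
  show "v \<in> bags ! j" if "i \<le> j" "j \<le> l" "l < length bags" "v \<in> bags ! i" "v \<in> bags ! l" for v i j l
    using that bag_convex[of v i l j] by (simp add: bags_def)
qed

end

lemma AT_free_dominating_shortest_path:
  assumes sg: "simple_graph V E" and at: "AT_free V E" and ne: "V \<noteq> {}"
    and conn: "connected_on V E"
  shows "\<exists>p k. dominating_shortest_path V E p k"
proof -
  obtain x y where xy: "x \<in> V" "y \<in> V"
    and dom_pair: "\<And>w. w \<in> V \<Longrightarrow> \<not> path_within E (V - closed_nbhd V E w) x y"
    using AT_free_dominating_pair[OF sg at ne] by blast
  have "(\<lambda>u v. E u v \<and> u \<in> V \<and> v \<in> V)\<^sup>*\<^sup>* x y" using conn xy by (simp add: connected_on_def)
  then have "E\<^sup>*\<^sup>* x y" by (rule rtranclp_mono[THEN predicate2D, rotated]) auto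
  then have "\<exists>m. (E ^^ m) x y" by (simp add: rtranclp_power)
  define k where "k = (LEAST m. (E ^^ m) x y)"
  have "(E ^^ k) x y" unfolding k_def using \<open>\<exists>m. _\<close> by (rule LeastI_ex)
  then obtain p where p: "p 0 = x" "p k = y" and edges: "\<And>i. i < k \<Longrightarrow> E (p i) (p (Suc i))"
    unfolding relpowp_fun_conv by blast
  interpret shortest_path V E p k
  proof
    show "k \<le> m" if "(E ^^ m) (p 0) (p k)" for m
      using that p unfolding k_def by (auto intro: Least_le)
  qed (use sg xy p edges in auto)
  have "\<exists>j\<le>k. w \<in> closed_nbhd V E (p j)" if w: "w \<in> V" for w
  proof (rule ccontr)
    assume "\<not> ?thesis"
    then have "p j \<in> V - closed_nbhd V E w" if "j \<le> k" for j
      using that path_vertex_in_V closed_nbhd_commute[OF sg, of w "p j"] by blast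
    then have "path_within E (V - closed_nbhd V E w) x y"
      using path_within_walk[of k E p] edges p by simp
    with dom_pair[OF w] show False by simp
  qed
  then have "dominating_shortest_path V E p k" by unfold_locales
  then show ?thesis by blast
qed

lemma connected_AT_free_path_decomposition:
  assumes sg: "simple_graph V E" and at: "AT_free V E" and ne: "V \<noteq> {}" and conn: "connected_on V E"
    and deg: "\<And>v. v \<in> V \<Longrightarrow> degree V E v \<le> D" and D: "1 \<le> D"
  shows "\<exists>Bs. path_decomposition V E Bs \<and> (\<forall>B\<in>set Bs. card B \<le> 3 * D - 1)"
proof -
  obtain p k where "dominating_shortest_path V E p k"
    using AT_free_dominating_shortest_path[OF sg at ne conn] by blast
  then interpret dominating_shortest_path V E p k .
  have "path_decomposition V E bags" using at by (rule path_decomposition_bags)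
  moreover have "\<forall>B\<in>set bags. card B \<le> 3 * D - 1" using card_bag[OF deg D] by (auto simp: set_bags)
  ultimately show ?thesis by blast
qed

lemma connected_component_split:
  assumes sg: "simple_graph V E" and x: "x \<in> V" and C: "C = {v. E\<^sup>*\<^sup>* x v}"
  shows "x \<in> C" "C \<subseteq> V" "connected_on C (induced E C)"
    "\<And>u v. E u v \<Longrightarrow> induced E C u v \<or> induced E (V - C) u v"
proof -
  have symp: "symp E" using sg by (rule simple_graph_symp)
  show "x \<in> C" by (simp add: C)
  show "connected_on C (induced E C)" unfolding C by (rule connected_on_component[OF symp])
  show "C \<subseteq> V"
  proof
    fix v assume "v \<in> C"
    then have "E\<^sup>*\<^sup>* x v" by (simp add: C)
    then show "v \<in> V" using x sg by (cases rule: rtranclp.cases) (auto simp: simple_graph_def)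
  qed
  fix u v assume uv: "E u v"
  have "v \<in> C" if "u \<in> C" using that uv by (simp add: C rtranclp.rtrancl_into_rtrancl)
  moreover have "u \<in> C" if "v \<in> C" using that sympD[OF symp uv] by (simp add: C rtranclp.rtrancl_into_rtrancl)
  moreover have "u \<in> V" "v \<in> V" using uv sg by (simp_all add: simple_graph_def)
  ultimately show "induced E C u v \<or> induced E (V - C) u v" using uv by (auto simp: induced_def)
qed

lemma AT_free_path_decomposition:
  assumes "simple_graph V E" "AT_free V E" "\<And>v. v \<in> V \<Longrightarrow> degree V E v \<le> D" "1 \<le> D"
  shows "\<exists>Bs. path_decomposition V E Bs \<and> (\<forall>B\<in>set Bs. card B \<le> 3 * D - 1)"
  using assms
proof (induction "card V" arbitrary: V E rule: less_induct)
  case less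
  note sg = less.prems(1) and at = less.prems(2) and deg = less.prems(3) and D = less.prems(4)
  show ?case
  proof (cases "V = {}")
    case True
    with sg have "path_decomposition V E [{}]" by (auto simp: path_decomposition_def simple_graph_def)
    then show ?thesis by auto
  next
    case False
    then obtain x where x: "x \<in> V" by blast
    define C where "C = {v. E\<^sup>*\<^sup>* x v}"
    note C = connected_component_split[OF sg x C_def]
    have deg_induced: "degree S (induced E S) v \<le> D" if "S \<subseteq> V" "v \<in> S" for S v
      using le_trans[OF degree_induced_le[OF sg that(1)] deg[OF subsetD[OF that]]] .
    obtain Bs where Bs: "path_decomposition C (induced E C) Bs" "\<forall>B\<in>set Bs. card B \<le> 3 * D - 1"
      using connected_AT_free_path_decomposition[OF simple_graph_induced[OF sg C(2)]
          AT_free_induced[OF at C(2)] _ C(3) deg_induced[OF C(2)] D] C(1)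
      by blast
    have "card (V - C) < card V"
      using sg C(1) x by (intro psubset_card_mono) (auto simp: simple_graph_def)
    then obtain Cs where Cs: "path_decomposition (V - C) (induced E (V - C)) Cs"
      "\<forall>B\<in>set Cs. card B \<le> 3 * D - 1"
      using less.hyps[OF _ simple_graph_induced[OF sg] AT_free_induced[OF at] deg_induced D] by blast
    have "path_decomposition (C \<union> (V - C)) E (Bs @ Cs)"
      using C(4) by (intro path_decomposition_append[OF Bs(1) Cs(1)]) blast+
    moreover have "C \<union> (V - C) = V" using C(2) by blast
    moreover have "\<forall>B\<in>set (Bs @ Cs). card B \<le> 3 * D - 1" using Bs(2) Cs(2) by auto
    ultimately show ?thesis by metis
  qed
qed

lemma degree_le_max_degree: "finite V \<Longrightarrow> v \<in> V \<Longrightarrow> degree V E v \<le> max_degree V E"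
  by (auto simp: max_degree_def)

theorem lemma12:
  fixes V :: "'a set" and E :: "'a \<Rightarrow> 'a \<Rightarrow> bool"
  assumes "simple_graph V E"
    and "AT_free V E"
    and "max_degree V E \<ge> 1"
  shows "treewidth V E \<le> 3 * max_degree V E - 2"
proof -
  have "\<And>v. v \<in> V \<Longrightarrow> degree V E v \<le> max_degree V E"
    using assms(1) by (intro degree_le_max_degree) (simp_all add: simple_graph_def)
  then obtain Bs where "path_decomposition V E Bs" "\<forall>B\<in>set Bs. card B \<le> 3 * max_degree V E - 1"
    using AT_free_path_decomposition[OF assms(1,2) _ assms(3)] by blast
  then have "treewidth V E \<le> (3 * max_degree V E - 1) - 1"
    by (rule treewidth_le_path_decomposition)
  then show ?thesis by simp
qed

end
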